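(* Let $n$ be a positive square-free odd integer. The following are equivalent: (1) there is a positive integer $k$ such that a square with rational side length can be dissected into $2nk^2$ congruent almost rational right triangles; (2) $2n$ is $\pi/4$-congruent or $3\pi/4$-congruent.
   Context: A dissection (tiling) of a polygon $P$ is a decomposition of $P$ into finitely many pairwise non-overlapping polygons whose union is $P$. A right triangle is called almost rational if its perpendicular sides have rational lengths $a$ and $b$ such that $a^2 + 2b^2 + 2ab$ or $a^2 + 2b^2 - 2ab$ is the square of a rational number. For $\theta \in \{\pi/4,3\pi/4\}$, a positive integer $n$ is $\theta$-congruent if there exist positive rationals $a,b,c$ such that the triangle with sides $a$, $b\sqrt2$, $c$ has angle $\theta$ opposite $c$ and area $n$; equivalently $ab = 2n$ and $c^2 = a^2+2b^2-2ab$ (for $\theta = \pi/4$), resp. $c^2 = a^2+2b^2+2ab$ (for $\theta=3\pi/4$). *)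

theory Defs
  imports "HOL-Analysis.Analysis" "HOL-Computational_Algebra.Squarefree"
begin

definition plane_isometry :: "(complex \<Rightarrow> complex) \<Rightarrow> bool" where
  "plane_isometry f \<longleftrightarrow> (\<forall>x y. dist (f x) (f y) = dist x y)"

definition congruent_sets :: "complex set \<Rightarrow> complex set \<Rightarrow> bool" where
  "congruent_sets A B \<longleftrightarrow> (\<exists>f. plane_isometry f \<and> f ` B = A)"

definition almost_rational_right_triangle :: "complex set \<Rightarrow> bool" where
  "almost_rational_right_triangle T \<longleftrightarrow>
     (\<exists>a b::real. a > 0 \<and> b > 0 \<and> a \<in> \<rat> \<and> b \<in> \<rat> \<and>
        ((\<exists>c\<in>\<rat>. a^2 + 2*b^2 + 2*a*b = c^2) \<or> (\<exists>c\<in>\<rat>. a^2 + 2*b^2 - 2*a*b = c^2)) \<and>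
        congruent_sets T (convex hull {0, complex_of_real a, \<i> * complex_of_real b}))"

definition rational_square :: "complex set \<Rightarrow> bool" where
  "rational_square S \<longleftrightarrow>
     (\<exists>s f. s \<in> \<rat> \<and> s > 0 \<and> plane_isometry f \<and>
        S = f ` {z. 0 \<le> Re z \<and> Re z \<le> s \<and> 0 \<le> Im z \<and> Im z \<le> s})"

definition dissection :: "complex set \<Rightarrow> (nat \<Rightarrow> complex set) \<Rightarrow> nat \<Rightarrow> bool" where
  "dissection P t N \<longleftrightarrow>
     (\<Union>i<N. t i) = P \<and> (\<forall>i<N. \<forall>j<N. i \<noteq> j \<longrightarrow> interior (t i) \<inter> interior (t j) = {})"

definition pi4_congruent :: "nat \<Rightarrow> bool" where
  "pi4_congruent m \<longleftrightarrow> (\<exists>a b c::rat. a > 0 \<and> b > 0 \<and> c > 0 \<and>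
      a * b = 2 * of_nat m \<and> c^2 = a^2 + 2*b^2 - 2*a*b)"

definition three_pi4_congruent :: "nat \<Rightarrow> bool" where
  "three_pi4_congruent m \<longleftrightarrow> (\<exists>a b c::rat. a > 0 \<and> b > 0 \<and> c > 0 \<and>
      a * b = 2 * of_nat m \<and> c^2 = a^2 + 2*b^2 + 2*a*b)"

end

theory Submission
  imports Defs
begin

text \<open>
  Both conditions are statements about a rational triangle of area \<open>ab/2\<close>: an almost
  rational right triangle with legs \<open>a, b\<close> has the same area as the triangle with sides
  \<open>a, b\<surd>2\<close> enclosing the angle \<open>\<theta>\<close>, whose third side is rational by assumption.
  If a rational square of side \<open>s\<close> is dissected into \<open>2nk\<^sup>2\<close> congruent copies of the right
  triangle, comparing areas gives \<open>s\<^sup>2 = nk\<^sup>2ab\<close>, so scaling the \<open>\<theta>\<close>-triangle by \<open>2nk/s\<close>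
  gives area \<open>2n\<close>. Conversely, a \<open>\<theta>\<close>-triangle of area \<open>2n\<close> with sides \<open>a, b\<surd>2\<close> gives
  \<open>ab = 4n\<close>; choosing \<open>k\<close> with \<open>k/a, k/b\<close> integral, the square of side \<open>2nk\<close> is a grid of
  \<open>a \<times> b\<close> rectangles, each cut along a diagonal, and consists of \<open>2(2nk)\<^sup>2/(ab) = 2nk\<^sup>2\<close>
  triangles.
\<close>

section \<open>Lebesgue measure in the complex plane\<close>

text \<open>Invariance of measure under orthogonal maps is available in the library only for
  \<open>real^'n\<close>, so it is transported to \<open>complex\<close> along the coordinate isomorphism.\<close>

definition complex_of_vec2 :: "real^2 \<Rightarrow> complex" where
  "complex_of_vec2 x = Complex (x$1) (x$2)"

definition vec2_of_complex :: "complex \<Rightarrow> real^2" where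
  "vec2_of_complex z = vector [Re z, Im z]"

lemma vec2_of_complex_nth [simp]:
  "vec2_of_complex z $ 1 = Re z" "vec2_of_complex z $ 2 = Im z"
  by (simp_all add: vec2_of_complex_def)

lemma complex_of_vec2_inverse [simp]: "complex_of_vec2 (vec2_of_complex z) = z"
  by (simp add: complex_of_vec2_def complex_eq_iff)

lemma complex_of_vec2_0 [simp]: "complex_of_vec2 0 = 0"
  by (simp add: complex_of_vec2_def complex_eq_iff)

lemma vec2_of_complex_inverse [simp]: "vec2_of_complex (complex_of_vec2 x) = x"
  by (simp add: vec_eq_iff forall_2 complex_of_vec2_def)

lemma linear_vec2_of_complex: "linear vec2_of_complex"
  by (intro linearI) (simp_all add: vec_eq_iff forall_2)

lemma norm_vec2_of_complex [simp]: "norm (vec2_of_complex z) = norm z"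
  by (simp add: norm_vec_def L2_set_def UNIV_2 cmod_def)

lemma dist_vec2_of_complex [simp]: "dist (vec2_of_complex z) (vec2_of_complex w) = dist z w"
  by (simp add: dist_norm linear_diff[OF linear_vec2_of_complex, symmetric])

lemma vec2_of_complex_image_eq_vimage: "vec2_of_complex ` A = complex_of_vec2 -` A"
  by (auto intro: image_eqI[where x = "complex_of_vec2 _"])

lemma measurable_complex_of_vec2 [measurable]: "complex_of_vec2 \<in> borel_measurable borel"
  unfolding complex_of_vec2_def by (intro borel_measurable_continuous_onI continuous_intros)

lemma distr_lborel_complex_of_vec2: "distr lborel borel complex_of_vec2 = lborel"
proof (rule lborel_eqI[symmetric])
  fix l u :: complex
  assume le: "\<And>b. b \<in> Basis \<Longrightarrow> l \<bullet> b \<le> u \<bullet> b"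
  have box: "complex_of_vec2 -` box l u = box (vec2_of_complex l) (vec2_of_complex u)"
    by (auto simp: mem_box_cart in_box_complex_iff complex_of_vec2_def forall_2)
  have nonempty: "cbox (vec2_of_complex l) (vec2_of_complex u) \<noteq> {}"
    using le[of 1] le[of \<i>] by (auto simp: interval_ne_empty_cart forall_2)
  have "emeasure (distr lborel borel complex_of_vec2) (box l u)
      = emeasure lborel (cbox (vec2_of_complex l) (vec2_of_complex u))"
    by (simp add: emeasure_distr box emeasure_lborel_box_eq emeasure_lborel_cbox_eq)
  also have "\<dots> = (Re u - Re l) * (Im u - Im l)"
    using content_cbox_cart[OF nonempty]
      emeasure_lborel_cbox_finite[of "vec2_of_complex l" "vec2_of_complex u"]
    by (subst emeasure_eq_ennreal_measure) (auto simp: UNIV_2)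
  finally show "emeasure (distr lborel borel complex_of_vec2) (box l u) = (\<Prod>b\<in>Basis. (u - l) \<bullet> b)"
    by (simp add: Basis_complex_def)
qed simp

lemma measure_vec2_of_complex_image:
  assumes "A \<in> sets borel"
  shows "measure lborel (vec2_of_complex ` A) = measure lborel A"
proof -
  have "measure lborel A = measure (distr lborel borel complex_of_vec2) A"
    by (simp only: distr_lborel_complex_of_vec2)
  also have "\<dots> = measure lborel (complex_of_vec2 -` A)"
    using assms by (simp add: measure_distr)
  finally show ?thesis
    by (simp add: vec2_of_complex_image_eq_vimage)
qed

lemma compact_vec2_of_complex_image: "compact A \<Longrightarrow> compact (vec2_of_complex ` A)"
  using linear_vec2_of_complex unfolding linear_conv_bounded_linear
  by (intro compact_continuous_image linear_continuous_on)

lemma measure_lebesgue_vec2_of_complex_image: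
  assumes "compact A"
  shows "measure lebesgue (vec2_of_complex ` A) = measure lebesgue A"
  using measure_vec2_of_complex_image[of A] assms compact_vec2_of_complex_image[OF assms]
  by (simp add: borel_compact)

lemma measure_orthogonal_image_complex:
  fixes h :: "complex \<Rightarrow> complex"
  assumes h: "orthogonal_transformation h" and A: "compact A"
  shows "measure lebesgue (h ` A) = measure lebesgue A"
proof -
  define h2 where "h2 = vec2_of_complex \<circ> h \<circ> complex_of_vec2"
  have "dist (h2 x) (h2 y) = dist x y" for x y
    using h dist_vec2_of_complex[of "complex_of_vec2 x" "complex_of_vec2 y"]
    by (simp add: h2_def orthogonal_transformation_isometry)
  moreover have "h2 0 = 0"
    using h linear_0[OF linear_vec2_of_complex]
    by (simp add: h2_def orthogonal_transformation_isometry)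
  ultimately have "orthogonal_transformation h2"
    by (simp add: orthogonal_transformation_isometry)
  have "compact (h ` A)"
    using h A by (intro compact_continuous_image linear_continuous_on)
      (simp add: orthogonal_transformation_linear flip: linear_conv_bounded_linear)
  then have "measure lebesgue (h ` A) = measure lebesgue (vec2_of_complex ` h ` A)"
    by (simp add: measure_lebesgue_vec2_of_complex_image)
  also have "vec2_of_complex ` h ` A = h2 ` vec2_of_complex ` A"
    by (simp add: h2_def image_comp comp_def)
  also have "measure lebesgue \<dots> = measure lebesgue (vec2_of_complex ` A)"
    using \<open>orthogonal_transformation h2\<close> A
    by (intro measure_orthogonal_image lmeasurable_compact compact_vec2_of_complex_image)
  also have "\<dots> = measure lebesgue A"
    using A by (rule measure_lebesgue_vec2_of_complex_image)
  finally show ?thesis .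
qed

lemma plane_isometry_translation: "plane_isometry ((+) c)"
  by (simp add: plane_isometry_def)

lemma plane_isometry_point_reflection: "plane_isometry ((-) c)"
  by (simp add: plane_isometry_def dist_norm norm_minus_commute)

lemma plane_isometry_comp: "plane_isometry f \<Longrightarrow> plane_isometry g \<Longrightarrow> plane_isometry (f \<circ> g)"
  by (simp add: plane_isometry_def)

lemma congruent_sets_trans:
  "congruent_sets A B \<Longrightarrow> congruent_sets B C \<Longrightarrow> congruent_sets A C"
  unfolding congruent_sets_def by (metis image_comp plane_isometry_comp)

lemma plane_isometry_eq_translation_orthogonal:
  assumes "plane_isometry f"
  obtains h where "orthogonal_transformation h" "f = (+) (f 0) \<circ> h"
proof
  show "orthogonal_transformation (\<lambda>z. f z - f 0)"
    using assms by (simp add: orthogonal_transformation_isometry plane_isometry_def dist_norm)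
qed auto

lemma
  assumes f: "plane_isometry f" and A: "compact A"
  shows compact_plane_isometry_image: "compact (f ` A)"
    and measure_plane_isometry_image: "measure lebesgue (f ` A) = measure lebesgue A"
    and convex_plane_isometry_image: "convex A \<Longrightarrow> convex (f ` A)"
proof -
  obtain h where h: "orthogonal_transformation h" and f_eq: "f = (+) (f 0) \<circ> h"
    using plane_isometry_eq_translation_orthogonal[OF f] .
  have lin: "linear h" using h by (rule orthogonal_transformation_linear)
  have image_eq: "f ` A = (+) (f 0) ` h ` A"
    by (subst f_eq) (simp add: image_comp)
  show "compact (f ` A)"
    unfolding image_eq using lin A
    by (intro compact_translation compact_continuous_image linear_continuous_on)
      (simp flip: linear_conv_bounded_linear)
  show "measure lebesgue (f ` A) = measure lebesgue A"
    unfolding image_eq measure_translation using h A by (rule measure_orthogonal_image_complex)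
  show "convex (f ` A)" if "convex A"
    unfolding image_eq by (intro convex_translation convex_linear_image lin that)
qed

section \<open>Right triangles and dissections\<close>

definition right_triangle :: "real \<Rightarrow> real \<Rightarrow> complex set" where
  "right_triangle a b = convex hull {0, complex_of_real a, \<i> * complex_of_real b}"

lemma compact_right_triangle: "compact (right_triangle a b)"
  unfolding right_triangle_def by (simp add: finite_imp_compact_convex_hull)

lemma convex_right_triangle: "convex (right_triangle a b)"
  unfolding right_triangle_def by (rule convex_convex_hull)

lemma right_triangle_eq:
  assumes a: "a > 0" and b: "b > 0"
  shows "right_triangle a b = {z. 0 \<le> Re z \<and> 0 \<le> Im z \<and> Re z * b + Im z * a \<le> a * b}"
    (is "_ = ?T")
proof
  have halfplanes: "?T = {z. 1 \<bullet> z \<ge> 0} \<inter> {z. \<i> \<bullet> z \<ge> 0} \<inter> {z. Complex b a \<bullet> z \<le> a * b}"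
    by (auto simp: inner_complex_def mult.commute)
  have "convex ?T"
    unfolding halfplanes by (intro convex_Int convex_halfspace_le convex_halfspace_ge)
  then show "right_triangle a b \<subseteq> ?T"
    unfolding right_triangle_def using a b by (intro hull_minimal) auto
next
  show "?T \<subseteq> right_triangle a b"
  proof
    fix z assume z: "z \<in> ?T"
    define v w where "v = Re z / a" and "w = Im z / b"
    have "v \<ge> 0" "w \<ge> 0" "v + w \<le> 1"
      using z a b by (auto simp: v_def w_def field_simps)
    moreover have "z = (1 - v - w) *\<^sub>R 0 + v *\<^sub>R complex_of_real a + w *\<^sub>R (\<i> * complex_of_real b)"
      using a b by (simp add: complex_eq_iff v_def w_def)
    ultimately show "z \<in> right_triangle a b"
      unfolding right_triangle_def convex_hull_3
      by (intro CollectI exI[of _ "1 - v - w"] exI[of _ v] exI[of _ w]) auto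
  qed
qed

lemma measure_right_triangle: "measure lebesgue (right_triangle a b) = \<bar>a * b\<bar> / 2"
proof -
  have "measure lebesgue (right_triangle a b)
      = measure lebesgue (vec2_of_complex ` right_triangle a b)"
    by (simp add: measure_lebesgue_vec2_of_complex_image compact_right_triangle)
  also have "vec2_of_complex ` right_triangle a b
      = convex hull {vec2_of_complex 0, vec2_of_complex a, vec2_of_complex (\<i> * b)}"
    unfolding right_triangle_def by (simp add: convex_hull_linear_image linear_vec2_of_complex)
  also have "measure lebesgue \<dots> = \<bar>a * b\<bar> / 2"
    by (simp add: content_triangle finite_imp_compact_convex_hull borel_compact)
  finally show ?thesis .
qed

lemma measure_dissection:
  assumes D: "dissection P t N"
    and compact: "\<And>i. i < N \<Longrightarrow> compact (t i)" and convex: "\<And>i. i < N \<Longrightarrow> convex (t i)"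
  shows "measure lebesgue P = (\<Sum>i<N. measure lebesgue (t i))"
proof -
  have "negligible (t i \<inter> t j)" if "i < N" "j < N" "i \<noteq> j" for i j
  proof -
    have "t i \<inter> t j \<subseteq> frontier (t i) \<union> frontier (t j)"
      using D that compact_imp_closed[OF compact] by (auto simp: dissection_def frontier_def)
    then show ?thesis
      using that compact convex
      by (meson negligible_Un negligible_convex_frontier negligible_subset)
  qed
  then have "measure lebesgue (\<Union>i<N. t i) = (\<Sum>i<N. measure lebesgue (t i))"
    by (intro measure_negligible_finite_Union_image)
      (auto simp: pairwise_def lmeasurable_compact compact)
  then show ?thesis
    using D by (simp add: dissection_def)
qed

lemma dissection_translation:
  assumes "dissection P t N"
  shows "dissection ((+) c ` P) (\<lambda>i. (+) c ` t i) N"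
proof -
  have "interior ((+) c ` t i) \<inter> interior ((+) c ` t j) = (+) c ` (interior (t i) \<inter> interior (t j))"
    for i j
    by (simp add: interior_translation image_Int)
  moreover have "P = (\<Union>i<N. t i)"
    using assms by (simp add: dissection_def)
  ultimately show ?thesis
    using assms by (simp add: dissection_def image_UN)
qed

lemma dissection_refine:
  assumes outer: "dissection P u N" and inner: "\<And>j. j < N \<Longrightarrow> dissection (u j) (v j) m"
  shows "dissection P (\<lambda>i. v (i div m) (i mod m)) (N * m)"
proof -
  have index: "i div m < N" "i mod m < m" if "i < N * m" for i
  proof -
    show "i div m < N"
      using that by (simp add: less_mult_imp_div_less)
    have "m \<noteq> 0"
      using that by (metis mult_0_right not_less_zero)
    then show "i mod m < m"
      by simp
  qed
  have "(\<Union>i<N * m. v (i div m) (i mod m)) = (\<Union>j<N. \<Union>r<m. v j r)"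
  proof
    show "(\<Union>i<N * m. v (i div m) (i mod m)) \<subseteq> (\<Union>j<N. \<Union>r<m. v j r)"
      using index by blast
  next
    show "(\<Union>j<N. \<Union>r<m. v j r) \<subseteq> (\<Union>i<N * m. v (i div m) (i mod m))"
    proof (intro UN_least)
      fix j r assume "j \<in> {..<N}" "r \<in> {..<m}"
      then have "j * m + r < Suc j * m" "Suc j * m \<le> N * m"
        using mult_le_mono1[of "Suc j" N m] by simp_all
      then have "j * m + r \<in> {..<N * m}"
        by simp
      then show "v j r \<subseteq> (\<Union>i<N * m. v (i div m) (i mod m))"
        using \<open>r \<in> {..<m}\<close> by (auto intro!: UN_upper[of "j * m + r"])
    qed
  qed
  also have "\<dots> = P"
    using outer inner by (simp add: dissection_def)
  finally have union: "(\<Union>i<N * m. v (i div m) (i mod m)) = P" .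
  have "interior (v (i div m) (i mod m)) \<inter> interior (v (i' div m) (i' mod m)) = {}"
    if "i < N * m" "i' < N * m" "i \<noteq> i'" for i i'
  proof (cases "i div m = i' div m")
    case True
    then have "i mod m \<noteq> i' mod m"
      using \<open>i \<noteq> i'\<close> by (metis div_mult_mod_eq)
    then show ?thesis
      using True inner[of "i div m"] index that by (simp add: dissection_def)
  next
    case False
    have "interior (v j r) \<subseteq> interior (u j)" if "j < N" "r < m" for j r
      using inner[OF that(1)] that(2) by (intro interior_mono) (auto simp: dissection_def)
    moreover have "interior (u (i div m)) \<inter> interior (u (i' div m)) = {}"
      using False outer index that by (simp add: dissection_def)
    ultimately show ?thesis
      using index that by blast
  qed
  then show ?thesis
    using union by (simp add: dissection_def)
qed

lemma measure_square_cbox: "s \<ge> 0 \<Longrightarrow> measure lebesgue (cbox 0 (Complex s s)) = s^2"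
  by (simp add: measure_lborel_cbox_eq Basis_complex_def power2_eq_square)

lemma area_of_square_dissection:
  assumes f: "plane_isometry f" and "s \<ge> 0" and D: "dissection (f ` cbox 0 (Complex s s)) t N"
    and congruent: "\<And>i. i < N \<Longrightarrow> congruent_sets (t i) (right_triangle a b)"
  shows "s^2 = N * (\<bar>a * b\<bar> / 2)"
proof -
  have piece: "compact (t i) \<and> convex (t i) \<and> measure lebesgue (t i) = \<bar>a * b\<bar> / 2"
    if i: "i < N" for i
  proof -
    obtain g where "plane_isometry g" "t i = g ` right_triangle a b"
      using congruent[OF i] unfolding congruent_sets_def by blast
    then show ?thesis
      by (simp add: compact_plane_isometry_image measure_plane_isometry_image
          convex_plane_isometry_image compact_right_triangle convex_right_triangle
          measure_right_triangle)
  qed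
  have "s^2 = measure lebesgue (f ` cbox 0 (Complex s s))"
    using measure_plane_isometry_image[OF f compact_cbox] measure_square_cbox[OF \<open>s \<ge> 0\<close>] by simp
  also have "\<dots> = (\<Sum>i<N. measure lebesgue (t i))"
    using D piece by (intro measure_dissection) auto
  also have "\<dots> = (\<Sum>i<N. \<bar>a * b\<bar> / 2)"
    using piece by (intro sum.cong) auto
  also have "\<dots> = N * (\<bar>a * b\<bar> / 2)"
    by simp
  finally show ?thesis .
qed

section \<open>Almost rational right triangles and \<open>\<theta>\<close>-triangles\<close>

text \<open>By the law of cosines, \<open>theta_side_sq e a b\<close> is the squared third side of the triangle
  with sides \<open>a\<close> and \<open>b\<surd>2\<close> enclosing the angle \<open>\<theta>\<close> with \<open>cos \<theta> = -e/\<surd>2\<close>;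
  so \<open>e = -1\<close> is the case \<open>\<theta> = \<pi>/4\<close> and \<open>e = 1\<close> the case \<open>\<theta> = 3\<pi>/4\<close>.\<close>

definition theta_side_sq :: "'a::comm_ring_1 \<Rightarrow> 'a \<Rightarrow> 'a \<Rightarrow> 'a" where
  "theta_side_sq e a b = a^2 + 2*b^2 + 2*e*a*b"

lemma of_rat_theta_side_sq:
  "of_rat (theta_side_sq e a b) = theta_side_sq (of_rat e) (of_rat a) (of_rat b)"
  by (simp add: theta_side_sq_def of_rat_add of_rat_mult of_rat_power)

lemma theta_side_sq_scale: "theta_side_sq e (L * a) (L * b) = L^2 * theta_side_sq e a b"
  by (simp add: theta_side_sq_def power2_eq_square algebra_simps)

lemma theta_side_sq_pos:
  fixes e a b :: "'a::linordered_idom"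
  assumes "e \<in> {-1, 1}" "b \<noteq> 0"
  shows "theta_side_sq e a b > 0"
proof -
  have "theta_side_sq e a b = (a + e*b)^2 + b^2"
    using assms(1) by (auto simp: theta_side_sq_def power2_eq_square algebra_simps)
  then show ?thesis
    using assms(2) by (simp add: add_nonneg_pos)
qed

lemma pi4_or_three_pi4_congruent_iff:
  "pi4_congruent m \<or> three_pi4_congruent m \<longleftrightarrow>
     (\<exists>e\<in>{-1, 1}. \<exists>a b c :: rat. a > 0 \<and> b > 0 \<and> c > 0 \<and> a * b = 2 * of_nat m \<and>
        c^2 = theta_side_sq e a b)"
  by (auto simp: pi4_congruent_def three_pi4_congruent_def theta_side_sq_def)

lemma rational_squareE:
  assumes "rational_square S"
  obtains s :: rat and f
  where "s > 0" "plane_isometry f" "S = f ` cbox 0 (Complex (of_rat s) (of_rat s))"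
proof -
  obtain s f where "s \<in> \<rat>" "s > 0" "plane_isometry f"
    and S: "S = f ` {z. 0 \<le> Re z \<and> Re z \<le> s \<and> 0 \<le> Im z \<and> Im z \<le> s}"
    using assms unfolding rational_square_def by blast
  moreover have "{z. 0 \<le> Re z \<and> Re z \<le> s \<and> 0 \<le> Im z \<and> Im z \<le> s} = cbox 0 (Complex s s)"
    by (auto simp: cbox_complex_eq)
  ultimately show thesis
    by (metis Rats_cases zero_less_of_rat_iff that)
qed

lemma rational_square_cbox: "s > 0 \<Longrightarrow> rational_square (cbox 0 (Complex (of_rat s) (of_rat s)))"
  unfolding rational_square_def
  by (rule exI[of _ "of_rat s"], rule exI[of _ id])
    (auto simp: plane_isometry_def cbox_complex_eq)

lemma almost_rational_right_triangleE:
  assumes "almost_rational_right_triangle T"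
  obtains a b c e :: rat
  where "a > 0" "b > 0" "e \<in> {-1, 1}" "c^2 = theta_side_sq e a b"
    and "congruent_sets T (right_triangle (of_rat a) (of_rat b))"
proof -
  obtain a b where ab: "a > 0" "b > 0" "a \<in> \<rat>" "b \<in> \<rat>"
    and "(\<exists>c\<in>\<rat>. a^2 + 2*b^2 + 2*a*b = c^2) \<or> (\<exists>c\<in>\<rat>. a^2 + 2*b^2 - 2*a*b = c^2)"
    and T: "congruent_sets T (right_triangle a b)"
    using assms unfolding almost_rational_right_triangle_def right_triangle_def by blast
  then have "\<exists>e\<in>{-1, 1 :: rat}. \<exists>c\<in>\<rat>. c^2 = theta_side_sq (of_rat e) a b"
    by (auto simp: theta_side_sq_def of_rat_minus)
  then obtain e c where e: "e \<in> {-1, 1 :: rat}" and "c \<in> \<rat>" "c^2 = theta_side_sq (of_rat e) a b"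
    by blast
  moreover obtain qa qb qc where "a = of_rat qa" "b = of_rat qb" "c = of_rat qc"
    using ab(3,4) \<open>c \<in> \<rat>\<close> by (metis Rats_cases)
  ultimately show thesis
    using ab T by (intro that[of qa qb e qc]) (simp_all flip: of_rat_theta_side_sq of_rat_power)
qed

lemma almost_rational_right_triangleI:
  fixes a b c e :: rat
  assumes "a > 0" "b > 0" "e \<in> {-1, 1}" "c^2 = theta_side_sq e a b"
  shows "almost_rational_right_triangle (right_triangle (of_rat a) (of_rat b))"
proof -
  have "theta_side_sq (of_rat e) (of_rat a) (of_rat b) = (of_rat c :: real)^2"
    using assms(4) by (simp flip: of_rat_theta_side_sq of_rat_power)
  then have rational_side: "\<exists>c\<in>\<rat>. theta_side_sq (of_rat e) (of_rat a) (of_rat b :: real) = c^2"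
    using Rats_of_rat by blast
  show ?thesis
    unfolding almost_rational_right_triangle_def
    by (rule exI[of _ "of_rat a"], rule exI[of _ "of_rat b"])
      (use assms(1-3) rational_side in \<open>auto simp: theta_side_sq_def of_rat_minus
        congruent_sets_def plane_isometry_def right_triangle_def intro: exI[of _ id]\<close>)
qed

section \<open>From a dissection to a \<open>\<theta>\<close>-congruent number\<close>

lemma theta_congruent_of_rescaled_triangle:
  fixes a b c e L :: rat
  assumes "a > 0" "b > 0" "e \<in> {-1, 1}" "c^2 = theta_side_sq e a b"
    and "L > 0" "L^2 * (a * b) = 2 * of_nat m"
  shows "pi4_congruent m \<or> three_pi4_congruent m"
proof -
  have "c \<noteq> 0"
    using assms(2-4) theta_side_sq_pos[of e b a] by auto
  then have "L * a > 0" "L * b > 0" "L * \<bar>c\<bar> > 0" "(L * a) * (L * b) = 2 * of_nat m"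
    "(L * \<bar>c\<bar>)^2 = theta_side_sq e (L * a) (L * b)"
    using assms
    by (simp_all add: theta_side_sq_scale power_mult_distrib power2_eq_square algebra_simps)
  then show ?thesis
    unfolding pi4_or_three_pi4_congruent_iff using assms(3) by blast
qed

lemma theta_congruent_of_square_dissection:
  assumes "n > 0" "k > 0" and S: "rational_square S" and T: "almost_rational_right_triangle T"
    and D: "dissection S t (2 * n * k^2)" and congruent: "\<forall>i < 2 * n * k^2. congruent_sets (t i) T"
  shows "pi4_congruent (2 * n) \<or> three_pi4_congruent (2 * n)"
proof -
  obtain s f where s: "s > 0" and f: "plane_isometry f"
    and S_eq: "S = f ` cbox 0 (Complex (of_rat s) (of_rat s))"
    using S by (rule rational_squareE)
  obtain a b c e where ab: "a > 0" "b > 0" and e: "e \<in> {-1, 1}" and c: "c^2 = theta_side_sq e a b"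
    and T_congruent: "congruent_sets T (right_triangle (of_rat a) (of_rat b))"
    using T by (rule almost_rational_right_triangleE)
  have "(of_rat s)^2 = real (2 * n * k^2) * (\<bar>of_rat a * of_rat b\<bar> / 2)"
    using area_of_square_dissection[of f "of_rat s" t "2 * n * k^2" "of_rat a" "of_rat b"]
      f s D congruent T_congruent unfolding S_eq by (auto intro: congruent_sets_trans)
  then have "of_rat (s^2) = (of_rat (of_nat n * of_nat k^2 * (a * b)) :: real)"
    using ab by (simp add: of_rat_mult of_rat_power)
  then have area: "s^2 = of_nat n * of_nat k^2 * (a * b)"
    by (simp only: of_rat_eq_iff)
  define L where "L = 2 * of_nat n * of_nat k / s"
  have "L^2 * (a * b) = 4 * of_nat n * (of_nat n * of_nat k^2 * (a * b)) / s^2"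
    by (simp add: L_def power_divide power_mult_distrib power2_eq_square)
  also have "\<dots> = 2 * of_nat (2 * n)"
    using s by (simp flip: area)
  finally have "L^2 * (a * b) = 2 * of_nat (2 * n)" .
  moreover have "L > 0"
    using s \<open>n > 0\<close> \<open>k > 0\<close> by (simp add: L_def)
  ultimately show ?thesis
    using theta_congruent_of_rescaled_triangle[OF ab e c] by blast
qed

section \<open>From a \<open>\<theta>\<close>-congruent number to a dissection\<close>

lemma dissection_rectangle_by_diagonal:
  assumes a: "a > 0" and b: "b > 0"
  shows "dissection (cbox 0 (Complex a b))
           (\<lambda>r. if r = 0 then right_triangle a b else (-) (Complex a b) ` right_triangle a b) 2"
proof -
  define T' where "T' = (-) (Complex a b) ` right_triangle a b"
  have T': "T' = {z. Re z \<le> a \<and> Im z \<le> b \<and> a * b \<le> Re z * b + Im z * a}"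
  proof -
    have "T' = {z. Complex a b - z \<in> right_triangle a b}"
      unfolding T'_def by (force simp: image_iff)
    then show ?thesis
      using a b by (auto simp: right_triangle_eq algebra_simps)
  qed
  have "right_triangle a b \<union> T' = cbox 0 (Complex a b)"
  proof (intro antisym Un_least subsetI)
    fix z assume "z \<in> right_triangle a b"
    then have "0 \<le> Re z" "0 \<le> Im z" "Re z * b + Im z * a \<le> a * b"
      using a b by (simp_all add: right_triangle_eq)
    moreover from this have "Re z * b \<le> a * b" "Im z * a \<le> a * b"
      using mult_nonneg_nonneg[of "Im z" a] mult_nonneg_nonneg[of "Re z" b] a b by linarith+
    then have "Re z \<le> a" "Im z \<le> b"
      using a b by (simp_all add: mult.commute[of a])
    ultimately show "z \<in> cbox 0 (Complex a b)"
      using a b by (simp add: cbox_complex_eq)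
  next
    fix z assume "z \<in> T'"
    then have "Re z \<le> a" "Im z \<le> b" "a * b \<le> Re z * b + Im z * a"
      by (simp_all add: T')
    moreover from this have "Re z * b \<le> a * b" "Im z * a \<le> a * b"
      using mult_right_mono[of "Re z" a b] mult_right_mono[of "Im z" b a] a b
      by (simp_all add: mult.commute[of b])
    then have "0 \<le> Re z * b" "0 \<le> Im z * a"
      using \<open>a * b \<le> Re z * b + Im z * a\<close> by linarith+
    ultimately show "z \<in> cbox 0 (Complex a b)"
      using a b by (simp add: cbox_complex_eq zero_le_mult_iff)
  next
    fix z assume "z \<in> cbox 0 (Complex a b)"
    then show "z \<in> right_triangle a b \<union> T'"
      using a b by (auto simp: cbox_complex_eq right_triangle_eq T')
  qed
  moreover have "interior (right_triangle a b) \<inter> interior T' = {}"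
  proof -
    have "right_triangle a b \<inter> T' \<subseteq> {z. Complex b a \<bullet> z = a * b}"
      using a b by (auto simp: right_triangle_eq T' inner_complex_def algebra_simps)
    then have "interior (right_triangle a b \<inter> T') \<subseteq> interior {z. Complex b a \<bullet> z = a * b}"
      by (rule interior_mono)
    then show ?thesis
      using a by (simp add: complex_eq_iff)
  qed
  ultimately show ?thesis
    unfolding dissection_def T'_def by (auto simp: numeral_2_eq_2 less_Suc_eq Int_commute)
qed

lemma obtain_step_containing:
  fixes a x :: real
  assumes "a > 0" "M > 0" "0 \<le> x" "x \<le> real M * a"
  obtains j where "j < M" "real j * a \<le> x" "x \<le> (real j + 1) * a"
proof -
  define k where "k = nat \<lfloor>x / a\<rfloor>"
  define j where "j = min (M - 1) k"
  have "real k \<le> x / a" "x / a < real k + 1"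
    using assms by (simp_all add: k_def)
  then have "real k * a \<le> x" "x < (real k + 1) * a"
    using assms by (simp_all add: field_simps)
  moreover have "real j * a \<le> real k * a"
    using assms by (intro mult_right_mono) (simp_all add: j_def)
  moreover have "x \<le> (real j + 1) * a"
  proof (cases "j = k")
    case False
    then have "real j + 1 = real M"
      using assms by (simp add: j_def min_def of_nat_diff split: if_splits)
    then show ?thesis
      using assms by simp
  qed (use \<open>x < (real k + 1) * a\<close> in simp)
  moreover have "j < M"
    using assms by (simp add: j_def)
  ultimately show thesis
    using that by (meson order_trans)
qed

lemma disjoint_open_steps:
  fixes a :: real
  assumes "a > 0" "j \<noteq> j'"
  shows "{real j * a<..<(real j + 1) * a} \<inter> {real j' * a<..<(real j' + 1) * a} = {}"
proof -
  have "(real i + 1) * a \<le> real i' * a" if "i < i'" for i i'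
    using that assms(1) by (intro mult_right_mono) auto
  then show ?thesis
    using assms(2) by (cases "j < j'") (fastforce simp: neq_iff)+
qed

lemma dissection_rectangle_grid:
  fixes a b :: real
  assumes a: "a > 0" and b: "b > 0" and M: "M1 > 0" "M2 > 0"
  shows "dissection (cbox 0 (Complex (real M1 * a) (real M2 * b)))
           (\<lambda>i. (+) (Complex (real (i mod M1) * a) (real (i div M1) * b)) ` cbox 0 (Complex a b))
           (M2 * M1)"
proof -
  define cell where "cell j l = (+) (Complex (real j * a) (real l * b)) ` cbox 0 (Complex a b)"
    for j l :: nat
  have cell_cbox: "cell j l = cbox (Complex (real j * a) (real l * b))
      (Complex (real j * a) (real l * b) + Complex a b)" for j l
    using cbox_translation[of "Complex (real j * a) (real l * b)" 0 "Complex a b"]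
    by (simp add: cell_def)
  have cell: "cell j l =
      {z. Re z \<in> {real j * a..(real j + 1) * a} \<and> Im z \<in> {real l * b..(real l + 1) * b}}" for j l
    by (simp add: cell_cbox cbox_complex_eq algebra_simps)
  have interior_cell: "interior (cell j l) =
      {z. Re z \<in> {real j * a<..<(real j + 1) * a} \<and> Im z \<in> {real l * b<..<(real l + 1) * b}}"
    for j l
    by (simp add: cell_cbox box_complex_eq algebra_simps)
  have index: "i mod M1 < M1" "i div M1 < M2" if "i < M2 * M1" for i
    using that M by (simp_all add: less_mult_imp_div_less)
  have "(\<Union>i<M2 * M1. cell (i mod M1) (i div M1)) = cbox 0 (Complex (real M1 * a) (real M2 * b))"
  proof (intro antisym UN_least subsetI)
    fix i z assume "i \<in> {..<M2 * M1}" "z \<in> cell (i mod M1) (i div M1)"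
    then have "real (i mod M1) * a \<le> Re z" "Re z \<le> (real (i mod M1) + 1) * a"
      "real (i div M1) * b \<le> Im z" "Im z \<le> (real (i div M1) + 1) * b"
      by (simp_all add: cell)
    moreover have "(real (i mod M1) + 1) * a \<le> real M1 * a"
      "(real (i div M1) + 1) * b \<le> real M2 * b"
      using index[of i] \<open>i \<in> {..<M2 * M1}\<close> a b by (auto intro!: mult_right_mono)
    moreover have "0 \<le> real (i mod M1) * a" "0 \<le> real (i div M1) * b"
      using a b by simp_all
    ultimately show "z \<in> cbox 0 (Complex (real M1 * a) (real M2 * b))"
      unfolding cbox_complex_eq by simp
  next
    fix z assume "z \<in> cbox 0 (Complex (real M1 * a) (real M2 * b))"
    then have "0 \<le> Re z" "Re z \<le> real M1 * a" "0 \<le> Im z" "Im z \<le> real M2 * b"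
      by (simp_all add: cbox_complex_eq)
    obtain j where j: "j < M1" "real j * a \<le> Re z" "Re z \<le> (real j + 1) * a"
      using obtain_step_containing[OF a M(1) \<open>0 \<le> Re z\<close> \<open>Re z \<le> real M1 * a\<close>] .
    obtain l where l: "l < M2" "real l * b \<le> Im z" "Im z \<le> (real l + 1) * b"
      using obtain_step_containing[OF b M(2) \<open>0 \<le> Im z\<close> \<open>Im z \<le> real M2 * b\<close>] .
    have "l * M1 + j < M2 * M1"
      using j(1) l(1) mult_le_mono1[of "Suc l" M2 M1] by simp
    moreover have "(l * M1 + j) mod M1 = j" "(l * M1 + j) div M1 = l"
      using j(1) by simp_all
    ultimately show "z \<in> (\<Union>i<M2 * M1. cell (i mod M1) (i div M1))"
      using j l by (intro UN_I[of "l * M1 + j"]) (simp_all add: cell)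
  qed
  moreover have
    "interior (cell (i mod M1) (i div M1)) \<inter> interior (cell (i' mod M1) (i' div M1)) = {}"
    if "i \<noteq> i'" for i i'
  proof -
    have "i mod M1 \<noteq> i' mod M1 \<or> i div M1 \<noteq> i' div M1"
      using that by (metis div_mult_mod_eq)
    then show ?thesis
    proof
      assume "i mod M1 \<noteq> i' mod M1"
      from disjoint_open_steps[OF a this] show ?thesis
        unfolding interior_cell by (auto simp: disjoint_iff)
    next
      assume "i div M1 \<noteq> i' div M1"
      from disjoint_open_steps[OF b this] show ?thesis
        unfolding interior_cell by (auto simp: disjoint_iff)
    qed
  qed
  ultimately have "dissection (cbox 0 (Complex (real M1 * a) (real M2 * b)))
      (\<lambda>i. cell (i mod M1) (i div M1)) (M2 * M1)"
    unfolding dissection_def by simp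
  then show ?thesis
    by (simp add: cell_def)
qed

lemma dissection_rectangle_into_right_triangles:
  assumes a: "a > 0" and b: "b > 0" and M: "M1 > 0" "M2 > 0"
  obtains t where "dissection (cbox 0 (Complex (real M1 * a) (real M2 * b))) t (M2 * M1 * 2)"
    and "\<And>i. congruent_sets (t i) (right_triangle a b)"
proof -
  define corner where "corner j = Complex (real (j mod M1) * a) (real (j div M1) * b)" for j
  define half where "half r =
    (if r = 0 then right_triangle a b else (-) (Complex a b) ` right_triangle a b)" for r :: nat
  define t where "t i = (+) (corner (i div 2)) ` half (i mod 2)" for i
  have "dissection (cbox 0 (Complex (real M1 * a) (real M2 * b))) t (M2 * M1 * 2)"
    unfolding t_def
  proof (rule dissection_refine)
    show "dissection (cbox 0 (Complex (real M1 * a) (real M2 * b)))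
        (\<lambda>j. (+) (corner j) ` cbox 0 (Complex a b)) (M2 * M1)"
      using dissection_rectangle_grid[OF a b M] by (simp add: corner_def)
    show "dissection ((+) (corner j) ` cbox 0 (Complex a b)) (\<lambda>r. (+) (corner j) ` half r) 2" for j
      using dissection_translation[OF dissection_rectangle_by_diagonal[OF a b]]
      by (simp add: half_def)
  qed
  moreover have "congruent_sets (t i) (right_triangle a b)" for i
  proof (cases "i mod 2 = 0")
    case True
    then show ?thesis
      unfolding congruent_sets_def t_def half_def using plane_isometry_translation by auto
  next
    case False
    then have "t i = ((+) (corner (i div 2)) \<circ> (-) (Complex a b)) ` right_triangle a b"
      by (simp add: t_def half_def image_comp)
    then show ?thesis
      using plane_isometry_comp[OF plane_isometry_translation plane_isometry_point_reflection]
      unfolding congruent_sets_def by blast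
  qed
  ultimately show thesis
    using that by blast
qed

lemma obtain_common_nat_multiple:
  fixes a b :: rat
  assumes "a > 0" "b > 0"
  obtains k M1 M2 :: nat where "k > 0" "of_nat k = of_nat M1 * a" "of_nat k = of_nat M2 * b"
proof -
  obtain p1 q1 p2 q2 where "quotient_of a = (p1, q1)" "quotient_of b = (p2, q2)"
    by (meson surj_pair)
  then have q: "q1 > 0" "q2 > 0" and ab: "a = of_int p1 / of_int q1" "b = of_int p2 / of_int q2"
    by (simp_all add: quotient_of_denom_pos quotient_of_div)
  then have p: "p1 > 0" "p2 > 0"
    using assms by (simp_all add: zero_less_divide_iff)
  show thesis
  proof (rule that[of "nat (p1 * p2)" "nat (p2 * q1)" "nat (p1 * q2)"])
    show "nat (p1 * p2) > 0"
      using p by simp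
    show "of_nat (nat (p1 * p2)) = of_nat (nat (p2 * q1)) * a"
      "of_nat (nat (p1 * p2)) = of_nat (nat (p1 * q2)) * b"
      using p q unfolding ab by (simp_all add: field_simps)
  qed
qed

lemma square_dissection_of_theta_congruent:
  assumes "n > 0" and "pi4_congruent (2 * n) \<or> three_pi4_congruent (2 * n)"
  shows "\<exists>k::nat. k > 0 \<and> (\<exists>S t T. rational_square S \<and> almost_rational_right_triangle T \<and>
           dissection S t (2 * n * k^2) \<and> (\<forall>i < 2 * n * k^2. congruent_sets (t i) T))"
proof -
  obtain e a b c :: rat where e: "e \<in> {-1, 1}" and abc: "a > 0" "b > 0" "c > 0"
    and ab: "a * b = 2 * of_nat (2 * n)" and c: "c^2 = theta_side_sq e a b"
    using assms(2) unfolding pi4_or_three_pi4_congruent_iff by blast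
  obtain k M1 M2 :: nat
    where k: "k > 0" and M1: "of_nat k = of_nat M1 * a" and M2: "of_nat k = of_nat M2 * b"
    using obtain_common_nat_multiple[OF abc(1,2)] .
  have "M1 > 0" "M2 > 0"
    using k M1 M2 by (auto intro!: Nat.gr0I)
  define s :: rat where "s = of_nat (2 * n * k)"
  have "of_rat s = real (2 * n * M1) * of_rat a" "of_rat s = real (2 * n * M2) * of_rat b"
    using arg_cong[OF M1, of "of_rat :: rat \<Rightarrow> real"] arg_cong[OF M2, of "of_rat :: rat \<Rightarrow> real"]
    by (simp_all add: s_def of_rat_mult)
  moreover have "(2 * n * M2) * (2 * n * M1) * 2 = 2 * n * k^2"
  proof -
    have "(of_nat k :: rat)^2 = of_nat M1 * of_nat M2 * (a * b)"
      by (simp add: power2_eq_square M1 flip: M2)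
    then have "(of_nat (k^2) :: rat) = of_nat (M1 * M2 * (4 * n))"
      unfolding ab by simp
    then have "k^2 = M1 * M2 * (4 * n)"
      by (simp only: of_nat_eq_iff)
    then show ?thesis
      by (simp add: algebra_simps)
  qed
  ultimately obtain t where "dissection (cbox 0 (Complex (of_rat s) (of_rat s))) t (2 * n * k^2)"
    and "\<And>i. congruent_sets (t i) (right_triangle (of_rat a) (of_rat b))"
    using dissection_rectangle_into_right_triangles[of "of_rat a" "of_rat b" "2 * n * M1" "2 * n * M2"]
      abc \<open>n > 0\<close> \<open>M1 > 0\<close> \<open>M2 > 0\<close>
    by (metis zero_less_of_rat_iff nat_0_less_mult_iff zero_less_numeral)
  moreover have "s > 0"
    using \<open>n > 0\<close> k by (simp add: s_def)
  ultimately show ?thesis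
    using k rational_square_cbox almost_rational_right_triangleI[OF abc(1,2) e c] by blast
qed

theorem proposition7p2:
  fixes n :: nat
  assumes "n > 0" and "odd n" and "squarefree n"
  shows "(\<exists>k::nat. k > 0 \<and>
            (\<exists>S t T. rational_square S \<and> almost_rational_right_triangle T \<and>
               dissection S t (2 * n * k^2) \<and>
               (\<forall>i < 2 * n * k^2. congruent_sets (t i) T)))
         \<longleftrightarrow> (pi4_congruent (2 * n) \<or> three_pi4_congruent (2 * n))"
  using theta_congruent_of_square_dissection[OF \<open>n > 0\<close>]
    square_dissection_of_theta_congruent[OF \<open>n > 0\<close>]
  by blast

end
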